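(* Let $V=[n]$, let $r:2^V\to\mathbb{R}_+$ be monotone, submodular and normalized ($r(\emptyset)=0$), and let $\mathbf{P}=\{\vec{x}\in\mathbb{R}^V:\vec{x}\ge 0,\ \vec{x}(S)\le r(S)\ \forall S\subseteq V\}$. Let $a,b,c\in\mathbb{R}^V_{\ge 0}$ be such that $a+c\in\mathbf{P}$, $b\in\mathbf{P}$, and $a\le b$ coordinate-wise. Then there exists a vector $d\in\mathbb{R}^V$ such that $0\le d\le c$, $b+d\in\mathbf{P}$, and $\|c-d\|_1\le\|b-a\|_1$.
   Context: $\vec{x}(S)=\sum_{i\in S}\vec{x}_i$. Inequalities between vectors are coordinate-wise. *)

theory Defs
  imports "HOL-Analysis.Analysis"
begin

text \<open>Ground set V = [n] = {1..n}; vectors in R^V are functions nat => real, only their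
values on V matter. x(S) = sum of x i over i in S.\<close>

definition monotone_set_fn :: "nat set \<Rightarrow> (nat set \<Rightarrow> real) \<Rightarrow> bool" where
  "monotone_set_fn V r \<longleftrightarrow> (\<forall>S T. S \<subseteq> T \<and> T \<subseteq> V \<longrightarrow> r S \<le> r T)"

definition submodular_set_fn :: "nat set \<Rightarrow> (nat set \<Rightarrow> real) \<Rightarrow> bool" where
  "submodular_set_fn V r \<longleftrightarrow>
     (\<forall>S T. S \<subseteq> V \<and> T \<subseteq> V \<longrightarrow> r (S \<union> T) + r (S \<inter> T) \<le> r S + r T)"

definition in_polytope :: "nat set \<Rightarrow> (nat set \<Rightarrow> real) \<Rightarrow> (nat \<Rightarrow> real) \<Rightarrow> bool" where
  "in_polytope V r x \<longleftrightarrow> (\<forall>i\<in>V. 0 \<le> x i) \<and> (\<forall>S. S \<subseteq> V \<longrightarrow> (\<Sum>i\<in>S. x i) \<le> r S)"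

definition l1_dist :: "nat set \<Rightarrow> (nat \<Rightarrow> real) \<Rightarrow> (nat \<Rightarrow> real) \<Rightarrow> real" where
  "l1_dist V x y = (\<Sum>i\<in>V. \<bar>x i - y i\<bar>)"

end

theory Submission
  imports Defs
begin

text \<open>Raise \<open>b\<close> greedily, one coordinate at a time, by as much of \<open>c\<close> as the polytope allows.
The result \<open>b + d\<close> is feasible, and every coordinate with \<open>d i < c i\<close> lies in a tight set.
By submodularity tight sets are closed under union, so these coordinates all lie in one
tight set \<open>T\<close>. Then \<open>a(T) + c(T) \<le> r(T) = b(T) + d(T)\<close>, i.e. \<open>(c - d)(T) \<le> (b - a)(T)\<close>,
while \<open>c - d\<close> vanishes outside \<open>T\<close>.\<close>

definition tight_set :: "nat set \<Rightarrow> (nat set \<Rightarrow> real) \<Rightarrow> (nat \<Rightarrow> real) \<Rightarrow> nat set \<Rightarrow> bool" where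
  "tight_set V r x S \<longleftrightarrow> S \<subseteq> V \<and> sum x S = r S"

lemma sum_fun_upd_add:
  fixes x :: "'a \<Rightarrow> 'b::comm_monoid_add"
  assumes "finite S"
  shows "sum (x(i := x i + t)) S = sum x S + (if i \<in> S then t else 0)"
proof -
  have "sum (x(i := x i + t)) S = sum (\<lambda>j. x j + (if j = i then t else 0)) S"
    by (rule sum.cong) auto
  also have "\<dots> = sum x S + (if i \<in> S then t else 0)"
    using assms by (simp add: sum.distrib)
  finally show ?thesis .
qed

lemma in_polytope_sum_le:
  "in_polytope V r x \<Longrightarrow> S \<subseteq> V \<Longrightarrow> sum x S \<le> r S"
  unfolding in_polytope_def by blast

lemma tight_set_Un:
  assumes "finite V" "submodular_set_fn V r" "in_polytope V r x"
    and S: "tight_set V r x S" and T: "tight_set V r x T"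
  shows "tight_set V r x (S \<union> T)"
proof -
  have "S \<subseteq> V" "T \<subseteq> V" using S T unfolding tight_set_def by auto
  then have "finite S" "finite T" using \<open>finite V\<close> finite_subset by auto
  then have "sum x (S \<union> T) + sum x (S \<inter> T) = sum x S + sum x T"
    by (rule sum.union_inter)
  moreover have "r (S \<union> T) + r (S \<inter> T) \<le> r S + r T"
    using assms(2) \<open>S \<subseteq> V\<close> \<open>T \<subseteq> V\<close> unfolding submodular_set_fn_def by blast
  moreover have "sum x (S \<union> T) \<le> r (S \<union> T)" "sum x (S \<inter> T) \<le> r (S \<inter> T)"
    using assms(3) \<open>S \<subseteq> V\<close> \<open>T \<subseteq> V\<close> by (auto intro: in_polytope_sum_le)
  ultimately show ?thesis
    using S T \<open>S \<subseteq> V\<close> \<open>T \<subseteq> V\<close> unfolding tight_set_def by auto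
qed

lemma tight_set_Union:
  assumes "finite V" "submodular_set_fn V r" "r {} = 0" "in_polytope V r x"
    and "finite F" "\<forall>S\<in>F. tight_set V r x S"
  shows "tight_set V r x (\<Union>F)"
  using assms(5,6)
proof (induction F rule: finite_induct)
  case empty
  then show ?case using \<open>r {} = 0\<close> by (simp add: tight_set_def)
next
  case (insert S F)
  then show ?case using tight_set_Un[OF assms(1,2,4)] by simp
qed

lemma tight_set_mono:
  assumes "tight_set V r x S" "in_polytope V r y" "\<forall>i\<in>V. x i \<le> y i"
  shows "tight_set V r y S"
proof -
  have "S \<subseteq> V" using assms(1) unfolding tight_set_def by simp
  then have "sum x S \<le> sum y S"
    using assms(3) by (intro sum_mono) auto
  moreover have "sum y S \<le> r S" using assms(2) \<open>S \<subseteq> V\<close> by (rule in_polytope_sum_le)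
  ultimately show ?thesis using assms(1) unfolding tight_set_def by simp
qed

lemma raise_coordinate_in_polytope:
  assumes "finite V" "in_polytope V r x" "i \<in> V" "0 \<le> s"
  obtains t where "0 \<le> t" "t \<le> s" "in_polytope V r (x(i := x i + t))"
    "t = s \<or> (\<exists>S. i \<in> S \<and> tight_set V r (x(i := x i + t)) S)"
proof -
  define A where "A = {S. S \<subseteq> V \<and> i \<in> S}"
  define slack where "slack = Min ((\<lambda>S. r S - sum x S) ` A)"
  define t where "t = min s slack"
  have "finite A" using \<open>finite V\<close> unfolding A_def by simp
  have "A \<noteq> {}" using \<open>i \<in> V\<close> unfolding A_def by auto
  have "slack \<in> (\<lambda>S. r S - sum x S) ` A"
    unfolding slack_def using \<open>finite A\<close> \<open>A \<noteq> {}\<close> by (intro Min_in) auto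
  then obtain S0 where "S0 \<subseteq> V" "i \<in> S0" and slack_S0: "slack = r S0 - sum x S0"
    unfolding A_def by blast
  have slack_le: "slack \<le> r S - sum x S" if "S \<subseteq> V" "i \<in> S" for S
    unfolding slack_def using \<open>finite A\<close> that by (intro Min_le) (auto simp: A_def)
  have "sum x S0 \<le> r S0" using assms(2) \<open>S0 \<subseteq> V\<close> by (rule in_polytope_sum_le)
  then have "0 \<le> t" using \<open>0 \<le> s\<close> slack_S0 unfolding t_def by simp
  have sum_raised: "sum (x(i := x i + t)) S = sum x S + (if i \<in> S then t else 0)"
    if "S \<subseteq> V" for S
    using sum_fun_upd_add[of S x i t] \<open>finite V\<close> that finite_subset by blast
  have "in_polytope V r (x(i := x i + t))"
    unfolding in_polytope_def
  proof (intro conjI allI impI ballI)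
    show "0 \<le> (x(i := x i + t)) j" if "j \<in> V" for j
      using assms(2) that \<open>0 \<le> t\<close> unfolding in_polytope_def by auto
    show "sum (x(i := x i + t)) S \<le> r S" if "S \<subseteq> V" for S
    proof (cases "i \<in> S")
      case True
      then have "t \<le> r S - sum x S" using slack_le[OF that] unfolding t_def by linarith
      then show ?thesis using sum_raised[OF that] True by simp
    next
      case False
      then show ?thesis using sum_raised[OF that] in_polytope_sum_le[OF assms(2) that] by simp
    qed
  qed
  moreover have "tight_set V r (x(i := x i + t)) S0" if "t \<noteq> s"
  proof -
    have "t = slack" using that unfolding t_def by linarith
    then show ?thesis
      using sum_raised[OF \<open>S0 \<subseteq> V\<close>] \<open>i \<in> S0\<close> slack_S0 \<open>S0 \<subseteq> V\<close>
      unfolding tight_set_def by simp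
  qed
  moreover have "t \<le> s" unfolding t_def by simp
  ultimately show ?thesis using that \<open>0 \<le> t\<close> \<open>i \<in> S0\<close> by blast
qed

lemma exists_saturating_augmentation:
  assumes "finite V" "U \<subseteq> V" "in_polytope V r b" "\<forall>i\<in>V. 0 \<le> c i"
  shows "\<exists>d. (\<forall>i\<in>V. 0 \<le> d i \<and> d i \<le> c i) \<and> in_polytope V r (\<lambda>i. b i + d i)
     \<and> (\<forall>i\<in>U. d i = c i \<or> (\<exists>S. i \<in> S \<and> tight_set V r (\<lambda>j. b j + d j) S))"
proof -
  have "finite U" using assms(1,2) finite_subset by blast
  then show ?thesis using \<open>U \<subseteq> V\<close>
  proof (induction U rule: finite_subset_induct)
    case empty
    show ?case using assms(3,4) by (intro exI[of _ "\<lambda>_. 0"]) auto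
  next
    case (insert i U)
    then obtain d where d_bounds: "\<forall>i\<in>V. 0 \<le> d i \<and> d i \<le> c i"
      and d_feasible: "in_polytope V r (\<lambda>i. b i + d i)"
      and d_saturated: "\<forall>j\<in>U. d j = c j \<or> (\<exists>S. j \<in> S \<and> tight_set V r (\<lambda>j. b j + d j) S)"
      by blast
    define x where "x = (\<lambda>j. b j + d j)"
    obtain t where t: "0 \<le> t" "t \<le> c i - d i" "in_polytope V r (x(i := x i + t))"
      "t = c i - d i \<or> (\<exists>S. i \<in> S \<and> tight_set V r (x(i := x i + t)) S)"
      using raise_coordinate_in_polytope[OF assms(1) d_feasible[folded x_def] \<open>i \<in> V\<close>, of "c i - d i"]
        d_bounds \<open>i \<in> V\<close> by auto
    define d' where "d' = d(i := d i + t)"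
    have x_raised: "(\<lambda>j. b j + d' j) = x(i := x i + t)"
      unfolding d'_def x_def by auto
    have kept_tight: "tight_set V r (\<lambda>j. b j + d' j) S" if "tight_set V r x S" for S
      using tight_set_mono[OF that t(3)] \<open>0 \<le> t\<close> unfolding x_raised by simp
    have "d' j = d j" if "j \<in> U" for j
      using that \<open>i \<notin> U\<close> unfolding d'_def by auto
    then have "\<forall>j\<in>U. d' j = c j \<or> (\<exists>S. j \<in> S \<and> tight_set V r (\<lambda>j. b j + d' j) S)"
      using d_saturated kept_tight unfolding x_def by metis
    moreover have "d' i = c i \<or> (\<exists>S. i \<in> S \<and> tight_set V r (\<lambda>j. b j + d' j) S)"
      using t(4) unfolding x_raised by (auto simp: d'_def)
    moreover have "\<forall>j\<in>V. 0 \<le> d' j \<and> d' j \<le> c j"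
      using d_bounds t(1,2) unfolding d'_def by auto
    ultimately show ?case
      using t(3) unfolding x_raised[symmetric] by blast
  qed
qed

lemma l1_dist_le_if_saturated_outside:
  fixes a b c d :: "nat \<Rightarrow> real"
  assumes "finite V" "T \<subseteq> V" "\<forall>i\<in>V. a i \<le> b i" "\<forall>i\<in>V. d i \<le> c i"
    and "\<forall>i\<in>V - T. d i = c i"
    and "sum (\<lambda>i. a i + c i) T \<le> sum (\<lambda>i. b i + d i) T"
  shows "l1_dist V c d \<le> l1_dist V b a"
proof -
  have "l1_dist V c d = sum (\<lambda>i. c i - d i) V"
    unfolding l1_dist_def using assms(4) by (intro sum.cong) auto
  also have "\<dots> = sum (\<lambda>i. c i - d i) T"
    using assms(1,2,5) by (intro sum.mono_neutral_right) auto
  also have "\<dots> \<le> sum (\<lambda>i. b i - a i) T"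
    using assms(6) by (simp add: sum.distrib sum_subtractf)
  also have "\<dots> \<le> sum (\<lambda>i. b i - a i) V"
    using assms(1-3) by (intro sum_mono2) auto
  also have "\<dots> = l1_dist V b a"
    unfolding l1_dist_def using assms(3) by (intro sum.cong) auto
  finally show ?thesis .
qed

theorem lemma3p1:
  fixes n :: nat and r :: "nat set \<Rightarrow> real" and a b c :: "nat \<Rightarrow> real"
  assumes "\<forall>S. S \<subseteq> {1..n} \<longrightarrow> 0 \<le> r S"
    and "monotone_set_fn {1..n} r"
    and "submodular_set_fn {1..n} r"
    and "r {} = 0"
    and "\<forall>i\<in>{1..n}. 0 \<le> a i \<and> 0 \<le> b i \<and> 0 \<le> c i"
    and "in_polytope {1..n} r (\<lambda>i. a i + c i)"
    and "in_polytope {1..n} r b"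
    and "\<forall>i\<in>{1..n}. a i \<le> b i"
  shows "\<exists>d :: nat \<Rightarrow> real. (\<forall>i\<in>{1..n}. 0 \<le> d i \<and> d i \<le> c i)
           \<and> in_polytope {1..n} r (\<lambda>i. b i + d i)
           \<and> l1_dist {1..n} c d \<le> l1_dist {1..n} b a"
proof -
  define V where "V = {1..n}"
  have "finite V" unfolding V_def by simp
  note hyps = assms[folded V_def]
  obtain d where d_bounds: "\<forall>i\<in>V. 0 \<le> d i \<and> d i \<le> c i"
    and d_feasible: "in_polytope V r (\<lambda>i. b i + d i)"
    and d_saturated: "\<forall>i\<in>V. d i = c i \<or> (\<exists>S. i \<in> S \<and> tight_set V r (\<lambda>j. b j + d j) S)"
    using exists_saturating_augmentation[OF \<open>finite V\<close> order_refl hyps(7), of c] hyps(5) by blast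
  define T where "T = \<Union>{S. tight_set V r (\<lambda>j. b j + d j) S}"
  have "finite {S. tight_set V r (\<lambda>j. b j + d j) S}"
    using \<open>finite V\<close> by (auto simp: tight_set_def intro: finite_subset[of _ "Pow V"])
  then have "tight_set V r (\<lambda>j. b j + d j) T"
    unfolding T_def by (intro tight_set_Union[OF \<open>finite V\<close> hyps(3,4) d_feasible]) auto
  then have "T \<subseteq> V" "sum (\<lambda>i. a i + c i) T \<le> sum (\<lambda>i. b i + d i) T"
    using in_polytope_sum_le[OF hyps(6)] unfolding tight_set_def by auto
  moreover have "\<forall>i\<in>V - T. d i = c i"
    using d_saturated unfolding T_def by blast
  ultimately have "l1_dist V c d \<le> l1_dist V b a"
    using d_bounds by (intro l1_dist_le_if_saturated_outside[OF \<open>finite V\<close> _ hyps(8)]) auto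
  then show ?thesis using d_bounds d_feasible unfolding V_def by blast
qed

end
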